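(* If $G$ is a $(3,2)$-critical graph that contains at least three odd cycles, then there exist two odd cycles of $G$ whose intersection is a path with at least one edge.
   Context: All graphs are finite and simple. An odd cycle is a cycle (subgraph) of odd length. For a graph $G$, ${\rm es}_{\chi}(G)$ is the minimum number of edges of $G$ whose removal results in a spanning subgraph $G_1$ with $\chi(G_1)=\chi(G)-1$. $G$ is edge-stability critical if ${\rm es}_{\chi}(G-e)<{\rm es}_{\chi}(G)$ for every edge $e$. $G$ is $(3,2)$-critical if it is edge-stability critical with $\chi(G)=3$ and ${\rm es}_{\chi}(G)=2$. *)

theory Defs
  imports Main
begin

definition simple_graph :: "'a set \<Rightarrow> 'a set set \<Rightarrow> bool" where
  "simple_graph V E \<longleftrightarrow> finite V \<and>
     (\<forall>e\<in>E. \<exists>u v. e = {u, v} \<and> u \<noteq> v \<and> u \<in> V \<and> v \<in> V)"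

definition proper_colouring :: "'a set \<Rightarrow> 'a set set \<Rightarrow> nat \<Rightarrow> ('a \<Rightarrow> nat) \<Rightarrow> bool" where
  "proper_colouring V E k c \<longleftrightarrow> (\<forall>v\<in>V. c v < k) \<and> (\<forall>u v. {u, v} \<in> E \<longrightarrow> c u \<noteq> c v)"

definition chromatic_number :: "'a set \<Rightarrow> 'a set set \<Rightarrow> nat" where
  "chromatic_number V E = (LEAST k. \<exists>c. proper_colouring V E k c)"

definition es_chi :: "'a set \<Rightarrow> 'a set set \<Rightarrow> nat" where
  "es_chi V E = (LEAST k. \<exists>F. F \<subseteq> E \<and> card F = k \<and>
      chromatic_number V (E - F) = chromatic_number V E - 1)"

definition edge_stability_critical :: "'a set \<Rightarrow> 'a set set \<Rightarrow> bool" where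
  "edge_stability_critical V E \<longleftrightarrow> (\<forall>e\<in>E. es_chi V (E - {e}) < es_chi V E)"

definition crit_3_2 :: "'a set \<Rightarrow> 'a set set \<Rightarrow> bool" where
  "crit_3_2 V E \<longleftrightarrow> edge_stability_critical V E \<and> chromatic_number V E = 3 \<and> es_chi V E = 2"

definition cycle_edges :: "'a list \<Rightarrow> 'a set set" where
  "cycle_edges vs = {{vs ! i, vs ! ((i + 1) mod length vs)} | i. i < length vs}"

definition path_edges :: "'a list \<Rightarrow> 'a set set" where
  "path_edges vs = {{vs ! i, vs ! (i + 1)} | i. i + 1 < length vs}"

text \<open>A cycle subgraph of (V,E), identified with its edge set C (its vertex set is \<Union>C).\<close>
definition is_cycle :: "'a set set \<Rightarrow> 'a set set \<Rightarrow> bool" where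
  "is_cycle E C \<longleftrightarrow> C \<subseteq> E \<and>
     (\<exists>vs. distinct vs \<and> length vs \<ge> 3 \<and> C = cycle_edges vs)"

definition odd_cycle :: "'a set set \<Rightarrow> 'a set set \<Rightarrow> bool" where
  "odd_cycle E C \<longleftrightarrow> is_cycle E C \<and> odd (card C)"

definition is_nontrivial_path :: "'a set \<Rightarrow> 'a set set \<Rightarrow> bool" where
  "is_nontrivial_path W F \<longleftrightarrow>
     (\<exists>ps. distinct ps \<and> length ps \<ge> 2 \<and> W = set ps \<and> F = path_edges ps)"

end

theory Submission
  imports Defs
begin

(* Deleting a set F of es_chi = 2 edges leaves a graph of chromatic number 2, so every odd cycle
   uses an edge of F, and two of the three given odd cycles, C and D, share an edge.  Walking along
   D from a vertex of C through an edge outside C until D first returns to C yields an ear Q of C.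
   Its endpoints cut C into two arcs; closing Q with either arc gives a cycle that meets C exactly
   in that arc, and since the two cycles have total length 2 |Q| + |C|, one of them is odd. *)

lemma path_edges_Nil [simp]: "path_edges [] = {}"
  and path_edges_singleton [simp]: "path_edges [x] = {}"
  by (simp_all add: path_edges_def)

lemma path_edges_Cons_Cons [simp]:
  "path_edges (x # y # xs) = insert {x, y} (path_edges (y # xs))"
  unfolding path_edges_def
proof (intro set_eqI iffI)
  fix e assume "e \<in> {{(x # y # xs) ! i, (x # y # xs) ! (i + 1)} | i. i + 1 < length (x # y # xs)}"
  then obtain i where "i + 1 < length (x # y # xs)" "e = {(x # y # xs) ! i, (x # y # xs) ! (i + 1)}"
    by blast
  then show "e \<in> insert {x, y} {{(y # xs) ! i, (y # xs) ! (i + 1)} | i. i + 1 < length (y # xs)}"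
    by (cases i) auto
next
  fix e assume "e \<in> insert {x, y} {{(y # xs) ! i, (y # xs) ! (i + 1)} | i. i + 1 < length (y # xs)}"
  then show "e \<in> {{(x # y # xs) ! i, (x # y # xs) ! (i + 1)} | i. i + 1 < length (x # y # xs)}"
    by (auto intro: exI[of _ 0] exI[of _ "Suc i" for i])
qed

lemma path_edges_append:
  "xs \<noteq> [] \<Longrightarrow> ys \<noteq> [] \<Longrightarrow>
    path_edges (xs @ ys) = insert {last xs, hd ys} (path_edges xs \<union> path_edges ys)"
  by (induction xs rule: induct_list012) (auto simp: neq_Nil_conv)

lemma path_edges_rev [simp]: "path_edges (rev xs) = path_edges xs"
proof (induction xs rule: induct_list012)
  case (3 x y zs)
  have "path_edges (rev (x # y # zs)) = path_edges (rev (y # zs) @ [x])"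
    by simp
  also have "\<dots> = insert {y, x} (path_edges (y # zs))"
    using path_edges_append[of "rev (y # zs)" "[x]"] 3 by simp
  finally show ?case
    by (simp add: insert_commute)
qed simp_all

lemma path_edges_subset_set: "e \<in> path_edges xs \<Longrightarrow> e \<subseteq> set xs"
  by (induction xs rule: induct_list012) auto

lemma finite_path_edges [simp]: "finite (path_edges xs)"
  by (induction xs rule: induct_list012) auto

lemma card_path_edges: "distinct xs \<Longrightarrow> card (path_edges xs) = length xs - 1"
proof (induction xs rule: induct_list012)
  case (3 x y zs)
  then have "{x, y} \<notin> path_edges (y # zs)"
    using path_edges_subset_set by fastforce
  with 3 show ?case
    by simp
qed simp_all

lemma Union_path_edges: "2 \<le> length xs \<Longrightarrow> \<Union>(path_edges xs) = set xs"
proof (induction xs rule: induct_list012)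
  case (3 x y zs)
  then show ?case
    by (cases zs) auto
qed simp_all

lemma cycle_edges_conv_path_edges:
  assumes "vs \<noteq> []"
  shows "cycle_edges vs = insert {last vs, hd vs} (path_edges vs)"
proof -
  define n where "n = length vs"
  have n: "0 < n"
    using assms by (simp add: n_def)
  have "cycle_edges vs = (\<lambda>i. {vs ! i, vs ! ((i + 1) mod n)}) ` insert (n - 1) {..<n - 1}"
    using n by (auto simp: cycle_edges_def n_def simp flip: lessThan_Suc)
  also have "\<dots> = insert {last vs, hd vs} ((\<lambda>i. {vs ! i, vs ! (i + 1)}) ` {..<n - 1})"
    using assms n by (auto simp: n_def last_conv_nth hd_conv_nth insert_commute)
  also have "\<dots> = insert {last vs, hd vs} (path_edges vs)"
    by (auto simp: path_edges_def n_def)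
  finally show ?thesis .
qed

lemma Union_cycle_edges: "vs \<noteq> [] \<Longrightarrow> \<Union>(cycle_edges vs) = set vs"
  by (induction vs rule: induct_list012)
    (auto simp: cycle_edges_conv_path_edges Union_path_edges)

lemma cycle_edges_append:
  assumes "xs \<noteq> []" "ys \<noteq> []"
  shows "cycle_edges (xs @ ys) = path_edges (xs @ [hd ys]) \<union> path_edges (ys @ [hd xs])"
  using assms by (auto simp: cycle_edges_conv_path_edges path_edges_append)

lemma cycle_edges_append_commute: "cycle_edges (xs @ ys) = cycle_edges (ys @ xs)"
  by (cases "xs = [] \<or> ys = []") (auto simp: cycle_edges_append)

lemma cycle_edges_rotate [simp]: "cycle_edges (rotate k vs) = cycle_edges vs"
  by (metis rotate_drop_take append_take_drop_id cycle_edges_append_commute)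

lemma card_cycle_edges:
  assumes "distinct vs" "3 \<le> length vs"
  shows "card (cycle_edges vs) = length vs"
proof -
  obtain x ys z where vs: "vs = x # ys @ [z]" and "ys \<noteq> []"
    using assms(2) by (cases vs; cases "tl vs" rule: rev_cases) fastforce+
  then have "{z, x} \<notin> path_edges vs"
    using assms(1) by (cases ys) (auto simp: doubleton_eq_iff dest: path_edges_subset_set)
  then show ?thesis
    using assms card_path_edges[of vs] by (simp add: cycle_edges_conv_path_edges vs)
qed

lemma proper_2_colouring_path_parity:
  assumes c: "proper_colouring V F 2 c" and "set xs \<subseteq> V" "path_edges xs \<subseteq> F" "xs \<noteq> []"
  shows "c (last xs) = (c (hd xs) + length xs - 1) mod 2"
  using assms(2-)
proof (induction xs rule: induct_list012)
  case (2 x)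
  then show ?case
    using c by (simp add: proper_colouring_def)
next
  case (3 x y zs)
  then have "c x \<noteq> c y" "c x < 2" "c y < 2"
    using c by (auto simp: proper_colouring_def)
  then have "c y = (c x + 1) mod 2"
    by presburger
  with 3 show ?case
    by (simp add: mod_simps)
qed simp

lemma proper_2_colouring_no_odd_cycle:
  assumes c: "proper_colouring V F 2 c" and "set vs \<subseteq> V" "odd (length vs)"
  shows "\<not> cycle_edges vs \<subseteq> F"
proof
  assume F: "cycle_edges vs \<subseteq> F"
  have "vs \<noteq> []"
    using assms(3) by auto
  then have "{last vs, hd vs} \<in> F" "path_edges vs \<subseteq> F"
    using F by (auto simp: cycle_edges_conv_path_edges)
  moreover have "c (hd vs) < 2"
    using c assms(2) hd_in_set[OF \<open>vs \<noteq> []\<close>] by (auto simp: proper_colouring_def)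
  then have "c (last vs) = c (hd vs)"
    using proper_2_colouring_path_parity[OF c assms(2) \<open>path_edges vs \<subseteq> F\<close> \<open>vs \<noteq> []\<close>]
      assms(3) by (auto elim!: oddE)
  ultimately show False
    using c by (auto simp: proper_colouring_def)
qed

lemma simple_graph_edgeD:
  assumes "simple_graph V E" "{u, v} \<in> E"
  shows "u \<noteq> v" "u \<in> V" "v \<in> V"
proof -
  obtain a b where "{u, v} = {a, b}" "a \<noteq> b" "a \<in> V" "b \<in> V"
    using assms unfolding simple_graph_def by blast
  then show "u \<noteq> v" "u \<in> V" "v \<in> V"
    by (auto simp: doubleton_eq_iff)
qed

lemma simple_graph_Union_subset: "simple_graph V E \<Longrightarrow> \<Union>E \<subseteq> V"
  unfolding simple_graph_def by fastforce

lemma simple_graph_subset: "simple_graph V E \<Longrightarrow> F \<subseteq> E \<Longrightarrow> simple_graph V F"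
  unfolding simple_graph_def by (meson subsetD)

lemma proper_colouring_chromatic_number:
  assumes "simple_graph V E"
  shows "\<exists>c. proper_colouring V E (chromatic_number V E) c"
proof -
  have "finite V"
    using assms by (simp add: simple_graph_def)
  then obtain f :: "'a \<Rightarrow> nat" and n where f: "f ` V = {i. i < n}" "inj_on f V"
    using finite_imp_inj_to_nat_seg by blast
  have "proper_colouring V E n f"
    unfolding proper_colouring_def
  proof (intro conjI allI ballI impI)
    fix v
    assume "v \<in> V"
    then show "f v < n"
      using f(1) by auto
  next
    fix u v
    assume e: "{u, v} \<in> E"
    show "f u \<noteq> f v"
      using f(2) simple_graph_edgeD[OF assms e] by (auto dest: inj_onD)
  qed
  then have "\<exists>k c. proper_colouring V E k c"
    by blast
  then show ?thesis
    unfolding chromatic_number_def by (rule LeastI_ex)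
qed

lemma chromatic_number_no_edges: "chromatic_number V {} \<le> 1"
  unfolding chromatic_number_def proper_colouring_def
  by (rule Least_le) auto

lemma chromatic_number_single_edge:
  assumes "u \<noteq> w" "u \<in> V" "w \<in> V"
  shows "chromatic_number V {{u, w}} = 2"
  unfolding chromatic_number_def
proof (rule Least_equality)
  show "\<exists>c. proper_colouring V {{u, w}} 2 c"
    using assms unfolding proper_colouring_def
    by (intro exI[of _ "\<lambda>v. if v = u then 0 else 1"]) (auto simp: doubleton_eq_iff)
next
  fix k
  assume "\<exists>c. proper_colouring V {{u, w}} k c"
  then obtain c where "c u < k" "c w < k" "c u \<noteq> c w"
    using assms unfolding proper_colouring_def by blast
  then show "2 \<le> k"
    by linarith
qed

lemma es_chi_attained:
  assumes "simple_graph V E" "chromatic_number V E = 3"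
  shows "\<exists>F \<subseteq> E. card F = es_chi V E \<and> chromatic_number V (E - F) = 2"
proof -
  have "E \<noteq> {}"
    using assms(2) chromatic_number_no_edges[of V] by auto
  then obtain u w where e: "{u, w} \<in> E"
    using assms(1) unfolding simple_graph_def by (metis ex_in_conv)
  then have "E - (E - {{u, w}}) = {{u, w}}"
    by blast
  then have "chromatic_number V (E - (E - {{u, w}})) = chromatic_number V E - 1"
    using assms(2) chromatic_number_single_edge simple_graph_edgeD[OF assms(1) e] by simp
  then have "\<exists>k F. F \<subseteq> E \<and> card F = k \<and> chromatic_number V (E - F) = chromatic_number V E - 1"
    by blast
  from LeastI_ex[OF this] show ?thesis
    using assms(2) unfolding es_chi_def by simp
qed

lemma odd_cycle_meets_deleted_edges:
  assumes "simple_graph V E" "odd_cycle E C" "proper_colouring V (E - F) 2 c"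
  shows "C \<inter> F \<noteq> {}"
proof
  assume "C \<inter> F = {}"
  obtain vs where vs: "distinct vs" "3 \<le> length vs" "C = cycle_edges vs" "C \<subseteq> E" "odd (card C)"
    using assms(2) unfolding odd_cycle_def is_cycle_def by blast
  have "vs \<noteq> []"
    using vs(2) by auto
  then have "set vs = \<Union>C"
    using vs(3) Union_cycle_edges by metis
  then have "set vs \<subseteq> V"
    using vs(4) simple_graph_Union_subset[OF assms(1)] by blast
  moreover have "odd (length vs)"
    using vs(3,5) card_cycle_edges[OF vs(1,2)] by simp
  moreover have "cycle_edges vs \<subseteq> E - F"
    using vs \<open>C \<inter> F = {}\<close> by blast
  ultimately show False
    using proper_2_colouring_no_odd_cycle[OF assms(3)] by blast
qed

lemma path_edges_append_subset: "path_edges xs \<subseteq> path_edges (xs @ ys)"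
  by (cases "xs = [] \<or> ys = []") (auto simp: path_edges_append)

lemma path_edges_subset_cycle_edges: "path_edges vs \<subseteq> cycle_edges vs"
  by (cases "vs = []") (auto simp: cycle_edges_conv_path_edges)

lemma empty_notin_path_edges: "{} \<notin> path_edges xs"
  by (auto simp: path_edges_def)

lemma path_edges_snoc_meets:
  assumes "e \<in> path_edges (ts @ [y])"
  shows "e \<inter> set ts \<noteq> {}"
proof (cases "ts = []")
  case False
  then have "e = {last ts, y} \<or> e \<in> path_edges ts"
    using assms by (simp add: path_edges_append)
  then show ?thesis
  proof
    assume "e = {last ts, y}"
    then show ?thesis
      using False by simp
  next
    assume "e \<in> path_edges ts"
    then have "e \<subseteq> set ts" "e \<noteq> {}"
      using path_edges_subset_set empty_notin_path_edges by blast+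
    then show ?thesis
      by blast
  qed
qed (use assms in simp)

lemma cycle_edges_Cons_meets:
  assumes "e \<in> cycle_edges (x # rest)" "rest \<noteq> []"
  shows "e = {x, hd rest} \<or> e \<inter> set rest \<noteq> {}"
proof -
  have "cycle_edges (x # rest) = insert {last rest, x} (insert {x, hd rest} (path_edges rest))"
    using assms(2) by (cases rest) (simp_all add: cycle_edges_conv_path_edges)
  then consider "e = {last rest, x}" | "e = {x, hd rest}" | "e \<in> path_edges rest"
    using assms(1) by blast
  then show ?thesis
  proof cases
    case 1
    then show ?thesis
      using last_in_set[OF assms(2)] by blast
  next
    case 3
    then have "e \<subseteq> set rest" "e \<noteq> {}"
      using path_edges_subset_set empty_notin_path_edges by blast+
    then show ?thesis
      by blast
  qed simp
qed

lemma cycle_exit_vertex: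
  assumes "C \<inter> cycle_edges ds \<noteq> {}" "\<not> cycle_edges ds \<subseteq> C"
  shows "\<exists>l < length ds. ds ! l \<in> \<Union>C \<and> {ds ! l, ds ! ((l + 1) mod length ds)} \<notin> C"
proof (rule ccontr)
  define n where "n = length ds"
  assume "\<not> ?thesis"
  then have step: "ds ! l \<in> \<Union>C \<Longrightarrow> l < n \<Longrightarrow> {ds ! l, ds ! ((l + 1) mod n)} \<in> C" for l
    by (auto simp: n_def)
  obtain k where k: "k < n" "{ds ! k, ds ! ((k + 1) mod n)} \<in> C"
    using assms(1) unfolding cycle_edges_def n_def by blast
  obtain i where i: "i < n" "{ds ! i, ds ! ((i + 1) mod n)} \<notin> C"
    using assms(2) unfolding cycle_edges_def n_def by blast
  have n: "0 < n"
    using k by simp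
  have all: "ds ! ((k + t) mod n) \<in> \<Union>C" for t
  proof (induction t)
    case 0
    then show ?case
      using k by auto
  next
    case (Suc t)
    then have "{ds ! ((k + t) mod n), ds ! (((k + t) mod n + 1) mod n)} \<in> C"
      using step n by simp
    then show ?case
      by (auto simp: mod_Suc_eq)
  qed
  have "(k + (i + n - k)) mod n = i"
    using k i by simp
  then have "ds ! i \<in> \<Union>C"
    using all[of "i + n - k"] by simp
  then show False
    using step i by blast
qed

lemma cycle_exit_rotation:
  assumes "distinct ds" "2 \<le> length ds" "C \<inter> cycle_edges ds \<noteq> {}" "\<not> cycle_edges ds \<subseteq> C"
  shows "\<exists>x rest. rest \<noteq> [] \<and> distinct (x # rest) \<and> cycle_edges (x # rest) = cycle_edges ds \<and>
           x \<in> \<Union>C \<and> {x, hd rest} \<notin> C"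
proof -
  define n where "n = length ds"
  obtain l where l: "l < n" "ds ! l \<in> \<Union>C" "{ds ! l, ds ! ((l + 1) mod n)} \<notin> C"
    using cycle_exit_vertex[OF assms(3,4)] unfolding n_def by blast
  have "length (rotate l ds) = n"
    by (simp add: n_def)
  then obtain x rest where xr: "rotate l ds = x # rest" and "rest \<noteq> []"
    using assms(2) unfolding n_def by (cases "rotate l ds"; cases "tl (rotate l ds)") auto
  have "0 < length ds" "1 < length ds"
    using assms(2) by auto
  then have "x = ds ! l" "hd rest = ds ! ((l + 1) mod n)"
    using nth_rotate[of 0 ds l] nth_rotate[of 1 ds l] xr \<open>rest \<noteq> []\<close> l(1)
    by (auto simp: n_def hd_conv_nth add.commute)
  moreover have "distinct (x # rest)" "cycle_edges (x # rest) = cycle_edges ds"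
    using assms(1) xr cycle_edges_rotate[of l ds] distinct_rotate[of l ds] by auto
  ultimately show ?thesis
    using l \<open>rest \<noteq> []\<close> by (intro exI[of _ x] exI[of _ rest]) auto
qed

lemma exists_ear:
  assumes "is_cycle E D" "C \<inter> D \<noteq> {}" "\<not> D \<subseteq> C"
  shows "\<exists>Q y. Q \<noteq> [] \<and> distinct (Q @ [y]) \<and> y \<in> \<Union>C \<and> set Q \<inter> \<Union>C = {hd Q} \<and>
           path_edges (Q @ [y]) \<subseteq> E - C"
proof -
  obtain ds where ds: "distinct ds" "3 \<le> length ds" "D = cycle_edges ds" "D \<subseteq> E"
    using assms(1) unfolding is_cycle_def by blast
  then obtain x rest where "rest \<noteq> []" and dist: "distinct (x # rest)"
    and D: "D = cycle_edges (x # rest)" and x: "x \<in> \<Union>C" and exit: "{x, hd rest} \<notin> C"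
    using cycle_exit_rotation[of ds C] assms(2,3) by auto
  obtain f where "f \<in> C" "f \<in> cycle_edges (x # rest)"
    using assms(2) D by blast
  then have "\<exists>v \<in> set rest. v \<in> \<Union>C"
    using cycle_edges_Cons_meets[OF _ \<open>rest \<noteq> []\<close>] exit by blast
  then obtain ts y ws where rest: "rest = ts @ y # ws" and y: "y \<in> \<Union>C"
    and ts: "\<forall>t \<in> set ts. t \<notin> \<Union>C"
    using split_list_first_prop[of rest "\<lambda>v. v \<in> \<Union>C"] by blast
  have "path_edges (x # ts @ [y]) \<subseteq> D"
    using path_edges_append_subset[of "x # ts @ [y]" ws] path_edges_subset_cycle_edges[of "x # rest"]
    by (simp add: D rest)
  moreover have "path_edges (x # ts @ [y]) \<inter> C = {}"
  proof -
    have "hd (ts @ [y]) = hd rest"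
      by (cases ts) (simp_all add: rest)
    then have "path_edges (x # ts @ [y]) = insert {x, hd rest} (path_edges (ts @ [y]))"
      using path_edges_append[of "[x]" "ts @ [y]"] by simp
    moreover have "e \<notin> C" if e: "e \<in> path_edges (ts @ [y])" for e
    proof
      assume "e \<in> C"
      moreover obtain t where "t \<in> e" "t \<in> set ts"
        using path_edges_snoc_meets[OF e] by blast
      ultimately show False
        using ts by blast
    qed
    ultimately show ?thesis
      using exit by auto
  qed
  moreover have "distinct ((x # ts) @ [y])" "set (x # ts) \<inter> \<Union>C = {hd (x # ts)}"
    using dist x ts by (auto simp: rest)
  ultimately show ?thesis
    using ds(4) y by (intro exI[of _ "x # ts"] exI[of _ y]) auto
qed

lemma ear_cycle:
  assumes "C \<subseteq> E" "Q \<noteq> []" "B \<noteq> []" "distinct Q" "distinct B" "hd Q \<notin> set B"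
    and ear: "set Q \<inter> \<Union>C = {hd Q}" "path_edges (Q @ [hd B]) \<subseteq> E - C"
    and arc: "set B \<subseteq> \<Union>C" "path_edges (B @ [hd Q]) \<subseteq> C"
  shows "is_cycle E (cycle_edges (Q @ B))"
    and "card (cycle_edges (Q @ B)) = length Q + length B"
    and "is_nontrivial_path (\<Union>C \<inter> \<Union>(cycle_edges (Q @ B))) (C \<inter> cycle_edges (Q @ B))"
proof -
  have edges: "cycle_edges (Q @ B) = path_edges (Q @ [hd B]) \<union> path_edges (B @ [hd Q])"
    using assms(2,3) by (rule cycle_edges_append)
  have "set Q \<inter> set B \<subseteq> set Q \<inter> \<Union>C"
    using arc(1) by blast
  then have "set Q \<inter> set B \<subseteq> {hd Q}"
    using ear(1) by simp
  then have "set Q \<inter> set B = {}"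
    using assms(6) by blast
  then have dist: "distinct (Q @ B)"
    using assms(4,5) by simp
  have len: "3 \<le> length (Q @ B)"
  proof (rule ccontr)
    assume "\<not> 3 \<le> length (Q @ B)"
    then obtain q b where "Q = [q]" "B = [b]"
      using assms(2,3) by (cases Q; cases B) (auto simp: Suc_le_eq)
    then show False
      using ear(2) arc(2) by (auto simp: insert_commute)
  qed
  show "is_cycle E (cycle_edges (Q @ B))"
    unfolding is_cycle_def using edges ear(2) arc(2) assms(1) dist len by blast
  show "card (cycle_edges (Q @ B)) = length Q + length B"
    using card_cycle_edges[OF dist len] by simp
  have "C \<inter> cycle_edges (Q @ B) = path_edges (B @ [hd Q])"
    using edges ear(2) arc(2) by blast
  moreover have "\<Union>C \<inter> \<Union>(cycle_edges (Q @ B)) = set (B @ [hd Q])"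
    using Union_cycle_edges[of "Q @ B"] assms(2) ear(1) arc(1) by auto
  moreover have "is_nontrivial_path (set (B @ [hd Q])) (path_edges (B @ [hd Q]))"
    unfolding is_nontrivial_path_def using assms(3,5,6)
    by (intro exI[of _ "B @ [hd Q]"]) (auto simp: Suc_le_eq)
  ultimately show "is_nontrivial_path (\<Union>C \<inter> \<Union>(cycle_edges (Q @ B))) (C \<inter> cycle_edges (Q @ B))"
    by simp
qed

lemma cycle_two_arcs:
  assumes "distinct cs" "x \<in> set cs" "y \<in> set cs" "x \<noteq> y"
  shows "\<exists>B1 B2. length B1 + length B2 = length cs \<and>
           (\<forall>B \<in> {B1, B2}. B \<noteq> [] \<and> distinct B \<and> hd B = y \<and> x \<notin> set B \<and> set B \<subseteq> set cs \<and>
              path_edges (B @ [x]) \<subseteq> cycle_edges cs)"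
proof -
  obtain as bs where cs: "cs = as @ x # bs"
    using split_list[OF assms(2)] by blast
  then have "y \<in> set (bs @ as)"
    using assms(3,4) by auto
  then obtain us ws where usws: "bs @ as = us @ y # ws"
    using split_list by metis
  have "cycle_edges cs = cycle_edges ((x # us) @ (y # ws))"
    using cycle_edges_append_commute[of as "x # bs"] by (simp add: cs usws)
  also have "\<dots> = path_edges (x # us @ [y]) \<union> path_edges (y # ws @ [x])"
    using cycle_edges_append[of "x # us" "y # ws"] by simp
  finally have arcs: "path_edges ((y # rev us) @ [x]) \<subseteq> cycle_edges cs"
    "path_edges ((y # ws) @ [x]) \<subseteq> cycle_edges cs"
    using path_edges_rev[of "x # us @ [y]"] by auto
  have dist: "distinct (x # us @ y # ws)" and set: "set (x # us @ y # ws) = set cs"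
    using assms(1) arg_cong[OF usws, of set] by (auto simp: cs simp flip: usws)
  have "length (y # ws) + length (y # rev us) = length cs"
    using arg_cong[OF usws, of length] by (simp add: cs)
  moreover have "y # ws \<noteq> [] \<and> distinct (y # ws) \<and> hd (y # ws) = y \<and> x \<notin> set (y # ws) \<and>
      set (y # ws) \<subseteq> set cs \<and> path_edges ((y # ws) @ [x]) \<subseteq> cycle_edges cs"
    using dist set arcs(2) by auto
  moreover have "y # rev us \<noteq> [] \<and> distinct (y # rev us) \<and> hd (y # rev us) = y \<and>
      x \<notin> set (y # rev us) \<and> set (y # rev us) \<subseteq> set cs \<and>
      path_edges ((y # rev us) @ [x]) \<subseteq> cycle_edges cs"
    using dist set arcs(1) by auto
  ultimately show ?thesis
    by blast
qed

lemma odd_cycle_crossing_cycle: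
  assumes "odd_cycle E C" "is_cycle E D" "C \<inter> D \<noteq> {}" "\<not> D \<subseteq> C"
  shows "\<exists>C'. odd_cycle E C' \<and> is_nontrivial_path (\<Union>C \<inter> \<Union>C') (C \<inter> C')"
proof -
  obtain Q y where Q: "Q \<noteq> []" "distinct (Q @ [y])" "y \<in> \<Union>C" "set Q \<inter> \<Union>C = {hd Q}"
    "path_edges (Q @ [y]) \<subseteq> E - C"
    using exists_ear[OF assms(2-4)] by blast
  obtain cs where cs: "distinct cs" "3 \<le> length cs" "C = cycle_edges cs" "C \<subseteq> E" "odd (card C)"
    using assms(1) unfolding odd_cycle_def is_cycle_def by blast
  have "cs \<noteq> []"
    using cs(2) by auto
  then have Ucs: "\<Union>C = set cs"
    using cs(3) Union_cycle_edges by metis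
  have "hd Q \<in> set Q \<inter> \<Union>C"
    using Q(4) by simp
  moreover have "y \<notin> set Q"
    using Q(2) by simp
  ultimately have "hd Q \<in> set cs" "y \<in> set cs" "hd Q \<noteq> y"
    using Q(3) Ucs by auto
  then obtain B1 B2 where lens: "length B1 + length B2 = length cs"
    and arcs: "\<forall>B \<in> {B1, B2}. B \<noteq> [] \<and> distinct B \<and> hd B = y \<and> hd Q \<notin> set B \<and>
                 set B \<subseteq> set cs \<and> path_edges (B @ [hd Q]) \<subseteq> cycle_edges cs"
    using cycle_two_arcs[OF cs(1)] by blast
  have closes_odd_cycle: "\<exists>C'. odd_cycle E C' \<and> is_nontrivial_path (\<Union>C \<inter> \<Union>C') (C \<inter> C')"
    if "B \<in> {B1, B2}" "odd (length Q + length B)" for B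
  proof -
    have B: "B \<noteq> []" "distinct B" "hd B = y" "hd Q \<notin> set B" "set B \<subseteq> \<Union>C"
      "path_edges (B @ [hd Q]) \<subseteq> C"
      using arcs that(1) Ucs cs(3) by auto
    have ear: "path_edges (Q @ [hd B]) \<subseteq> E - C" "distinct Q"
      using Q(2,5) B(3) by auto
    note C' = ear_cycle[OF cs(4) Q(1) B(1) ear(2) B(2,4) Q(4) ear(1) B(5,6)]
    show ?thesis
      using C' that(2) unfolding odd_cycle_def by metis
  qed
  have "card C = length cs"
    using cs(1-3) card_cycle_edges by simp
  then have "odd (length Q + length B1) \<or> odd (length Q + length B2)"
    using lens cs(5) by presburger
  then show ?thesis
    using closes_odd_cycle by blast
qed

lemma two_of_three_meet:
  assumes "card F = 2" "A \<inter> F \<noteq> {}" "B \<inter> F \<noteq> {}" "C \<inter> F \<noteq> {}"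
  shows "A \<inter> B \<noteq> {} \<or> A \<inter> C \<noteq> {} \<or> B \<inter> C \<noteq> {}"
proof -
  obtain f g where "F = {f, g}"
    using assms(1) by (meson card_2_iff)
  then show ?thesis
    using assms(2-4) by auto
qed

theorem lemma2p5:
  fixes V :: "'a set" and E :: "'a set set"
  assumes "simple_graph V E"
    and "crit_3_2 V E"
    and "\<exists>C1 C2 C3. odd_cycle E C1 \<and> odd_cycle E C2 \<and> odd_cycle E C3
           \<and> C1 \<noteq> C2 \<and> C1 \<noteq> C3 \<and> C2 \<noteq> C3"
  shows "\<exists>C1 C2. odd_cycle E C1 \<and> odd_cycle E C2 \<and>
           is_nontrivial_path (\<Union>C1 \<inter> \<Union>C2) (C1 \<inter> C2)"
proof -
  obtain C1 C2 C3 where C: "odd_cycle E C1" "odd_cycle E C2" "odd_cycle E C3"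
    "C1 \<noteq> C2" "C1 \<noteq> C3" "C2 \<noteq> C3"
    using assms(3) by blast
  have chi: "chromatic_number V E = 3" and es: "es_chi V E = 2"
    using assms(2) unfolding crit_3_2_def by auto
  obtain F where F: "F \<subseteq> E" "card F = es_chi V E" "chromatic_number V (E - F) = 2"
    using es_chi_attained[OF assms(1) chi] by blast
  have "simple_graph V (E - F)"
    using simple_graph_subset[OF assms(1)] by blast
  then obtain c where "proper_colouring V (E - F) 2 c"
    using proper_colouring_chromatic_number F(3) by metis
  then have "C1 \<inter> F \<noteq> {}" "C2 \<inter> F \<noteq> {}" "C3 \<inter> F \<noteq> {}"
    using C(1-3) odd_cycle_meets_deleted_edges[OF assms(1)] by blast+
  then obtain Ca Cb where Cab: "odd_cycle E Ca" "odd_cycle E Cb" "Ca \<inter> Cb \<noteq> {}" "\<not> Cb \<subseteq> Ca"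
    using two_of_three_meet[OF F(2)[unfolded es]] C by (metis Int_commute subset_antisym)
  then show ?thesis
    using odd_cycle_crossing_cycle[of E Ca Cb] unfolding odd_cycle_def by blast
qed

end
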